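(* Let $m,n,s,k$ be even integers such that $2\leqslant s\leqslant n$, $2\leqslant k\leqslant m$ and $ms=nk$, and let $c\geqslant 1$. For every abelian group $\Gamma$ of order $nkc$ there exists an $\mathrm{MRS}_\Gamma(m,n;s,k;c)$.
   Context: For positive integers $m,n,s,k,c$ and an abelian group $\Gamma$ of order $nkc$, an $\mathrm{MRS}_\Gamma(m,n;s,k;c)$ is a set of $c$ partially filled $m\times n$ arrays (some cells may be empty) with entries in $\Gamma$ such that: every element of $\Gamma$ appears exactly once and in a unique array; in every array each row contains exactly $s$ filled cells and each column contains exactly $k$ filled cells; and there exist $\omega,\delta\in\Gamma$ such that in every array each row sum is $\omega$ and each column sum is $\delta$. *)

theory Defs
  imports Main
begin

text \<open>A family of c partially filled m x n arrays with entries in the abelian group 'a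
  is modelled as A :: nat => nat => nat => 'a option, where A t i j is the content of
  cell (i,j) (row i < m, column j < n) of array t < c; None means the cell is empty.
  Values of A outside this index range are irrelevant.\<close>

definition filled_cells :: "nat \<Rightarrow> nat \<Rightarrow> nat \<Rightarrow> (nat \<Rightarrow> nat \<Rightarrow> nat \<Rightarrow> 'a option) \<Rightarrow> (nat \<times> nat \<times> nat) set" where
  "filled_cells m n c A = {(t, i, j). t < c \<and> i < m \<and> j < n \<and> A t i j \<noteq> None}"

definition is_MRS :: "nat \<Rightarrow> nat \<Rightarrow> nat \<Rightarrow> nat \<Rightarrow> nat \<Rightarrow> (nat \<Rightarrow> nat \<Rightarrow> nat \<Rightarrow> 'a::ab_group_add option) \<Rightarrow> bool" where
  "is_MRS m n s k c A \<longleftrightarrow>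
     (\<forall>g::'a. \<exists>!p. p \<in> filled_cells m n c A \<and> A (fst p) (fst (snd p)) (snd (snd p)) = Some g) \<and>
     (\<forall>t<c. \<forall>i<m. card {j. j < n \<and> A t i j \<noteq> None} = s) \<and>
     (\<forall>t<c. \<forall>j<n. card {i. i < m \<and> A t i j \<noteq> None} = k) \<and>
     (\<exists>\<omega> \<delta>.
        (\<forall>t<c. \<forall>i<m. (\<Sum>j | j < n \<and> A t i j \<noteq> None. the (A t i j)) = \<omega>) \<and>
        (\<forall>t<c. \<forall>j<n. (\<Sum>i | i < m \<and> A t i j \<noteq> None. the (A t i j)) = \<delta>))"

end

theory Submission
  imports Defs "HOL-Library.Z2" "HOL-Library.Disjoint_Sets"
begin

text \<open>
  Write \<open>m = 2M\<close>, \<open>n = 2N\<close>, \<open>s = 2S\<close>, \<open>k = 2K\<close>. Since \<open>|\<Gamma>| = 4cMS\<close> is divisible by 4,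
  \<open>\<Gamma>\<close> contains an element \<open>u\<close> of order two and an element \<open>q\<close> such that neither \<open>q\<close>
  nor \<open>q + u\<close> is a double. The reflections \<open>a \<mapsto> q - a\<close> and \<open>a \<mapsto> q + u - a\<close> then
  generate a Klein four-group acting freely on \<open>\<Gamma>\<close>, and each orbit, arranged as the
  \<open>2 \<times> 2\<close> array \<open>[a, q + u - a; q - a, a + u]\<close>, has row sums \<open>q + u\<close> and column
  sums \<open>q\<close>. The cells \<open>(x div S, x mod N)\<close>, \<open>x < MS\<close>, form an \<open>M \<times> N\<close> pattern
  with \<open>S\<close> cells in each row and \<open>K\<close> in each column. Replacing every cell of
  \<open>c\<close> copies of this pattern by a different orbit array yields the MRS.
\<close>

section \<open>Elements of order two and doubles\<close>

lemma even_card_if_fixpoint_free_involution: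
  assumes "finite X" "\<And>x. x \<in> X \<Longrightarrow> h x \<in> X" "\<And>x. x \<in> X \<Longrightarrow> h (h x) = x"
    and "\<And>x. x \<in> X \<Longrightarrow> h x \<noteq> x"
  shows "even (card X)"
proof -
  \<comment> \<open>Count modulo 2: the pairs \<open>{x, h x}\<close> contribute \<open>1 + 1 = 0\<close> in \<open>bit\<close>.\<close>
  have "(\<Sum>x\<in>X. 1 :: bit) = 0"
    by (rule sum_involution_eq_0[where h = h]) (simp_all add: assms)
  then show ?thesis
    by (metis even_of_nat_iff even_zero sum_constant mult_1_right)
qed

lemma exists_order_two_in_symmetric_set:
  fixes S :: "'a::ab_group_add set"
  assumes "finite S" "0 \<in> S" "\<And>x. x \<in> S \<Longrightarrow> -x \<in> S" "even (card S)"
  obtains v where "v \<in> S" "v \<noteq> 0" "v + v = 0"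
proof -
  let ?F = "{x \<in> S. x + x = 0}"
  have self_inverse: "-x = x \<longleftrightarrow> x + x = 0" for x :: 'a
    by (metis add.left_inverse minus_unique)
  have "even (card (S - ?F))"
    by (rule even_card_if_fixpoint_free_involution[where h = uminus])
      (use assms self_inverse in auto)
  moreover have "card S = card (S - ?F) + card ?F"
  proof -
    have "card ?F \<le> card S"
      using assms(1) by (rule card_mono) auto
    then show ?thesis
      using assms(1) by (simp add: card_Diff_subset)
  qed
  ultimately have "even (card ?F)"
    using assms(4) by simp
  moreover have "0 \<in> ?F"
    using assms(2) by simp
  ultimately have "?F \<noteq> {0}"
    by (intro notI) simp
  then show thesis
    using \<open>0 \<in> ?F\<close> that by blast
qed

lemma card_eq_card_doubles_mult_card_order_two:
  "card (UNIV :: 'a::{ab_group_add,finite} set) = card (range (\<lambda>a::'a. a + a)) * card {x::'a. x + x = 0}"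
proof -
  let ?K = "{x::'a. x + x = 0}"
  have fibre: "{a. a + a = b + b} = (\<lambda>x. x + b) ` ?K" for b :: 'a
  proof (rule set_eqI)
    fix a :: 'a
    have "a + a = b + b \<longleftrightarrow> (a - b) + (a - b) = 0"
      by (simp add: algebra_simps)
    then show "a \<in> {a. a + a = b + b} \<longleftrightarrow> a \<in> (\<lambda>x. x + b) ` ?K"
      by (auto intro: image_eqI[where x = "a - b"])
  qed
  have "card (UNIV :: 'a set) = (\<Sum>y\<in>range (\<lambda>a::'a. a + a). card {a. a + a = y})"
    using sum_fun_comp[of UNIV "range (\<lambda>a::'a. a + a)" "\<lambda>a. a + a" "\<lambda>_. 1::nat"] by simp
  also have "\<dots> = (\<Sum>y\<in>range (\<lambda>a::'a. a + a). card ?K)"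
    by (rule sum.cong) (auto simp: fibre card_image)
  finally show ?thesis
    by simp
qed

lemma unique_order_two_element_is_double:
  fixes u :: "'a::{ab_group_add,finite}"
  assumes "4 dvd card (UNIV :: 'a set)" "u \<noteq> 0" "{x::'a. x + x = 0} = {0, u}"
  shows "u \<in> range (\<lambda>a. a + a)"
proof -
  let ?D = "range (\<lambda>a::'a. a + a)"
  have "card {x::'a. x + x = 0} = 2"
    using assms(2,3) by simp
  then have "4 dvd card ?D * 2"
    using assms(1) card_eq_card_doubles_mult_card_order_two[where 'a = 'a] by simp
  then have "even (card ?D)"
    by presburger
  have "0 \<in> ?D"
    by (auto intro: range_eqI[where x = 0])
  have D_symmetric: "-x \<in> ?D" if "x \<in> ?D" for x
    using that by (auto intro: range_eqI[where x = "- _"])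
  obtain v where "v \<in> ?D" "v \<noteq> 0" "v + v = 0"
    using exists_order_two_in_symmetric_set[OF finite \<open>0 \<in> ?D\<close> D_symmetric \<open>even (card ?D)\<close>] by blast
  then show ?thesis
    using assms(3) by auto
qed

lemma exists_order_two_and_non_doubles:
  assumes "4 dvd card (UNIV :: 'a set)"
  obtains u q :: "'a::{ab_group_add,finite}"
  where "u \<noteq> 0" "u + u = 0" "q \<notin> range (\<lambda>a. a + a)" "q + u \<notin> range (\<lambda>a. a + a)"
proof -
  let ?D = "range (\<lambda>a::'a. a + a)"
  let ?K = "{x::'a. x + x = 0}"
  have card_UNIV: "card (UNIV :: 'a set) = card ?D * card ?K"
    by (rule card_eq_card_doubles_mult_card_order_two)
  have "0 \<in> ?D"
    by (auto intro: range_eqI[where x = 0])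
  then have "0 < card ?D"
    by (auto simp: card_gt_0_iff)
  obtain u :: 'a where u: "u \<noteq> 0" "u + u = 0"
  proof (rule exists_order_two_in_symmetric_set[of UNIV])
    show "even (card (UNIV :: 'a set))"
      using assms by presburger
  qed auto
  have "{0, u} \<subseteq> ?K"
    using u by auto
  have "card (?D \<union> (\<lambda>y. y + u) ` ?D) < card (UNIV :: 'a set)"
  proof (cases "u \<in> ?D")
    case True
    then have "(\<lambda>y. y + u) ` ?D \<subseteq> ?D"
      by (auto intro: range_eqI[where x = "_ + _"] simp: algebra_simps)
    moreover have "2 \<le> card ?K"
      using card_mono[of ?K "{0, u}"] \<open>{0, u} \<subseteq> ?K\<close> u(1) by simp
    ultimately show ?thesis
      using card_UNIV \<open>0 < card ?D\<close> by (simp add: Un_absorb2)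
  next
    case False
    then obtain w where "w \<in> ?K" "w \<notin> {0, u}"
      using unique_order_two_element_is_double[OF assms u(1)] \<open>{0, u} \<subseteq> ?K\<close> by blast
    then have "{0, u, w} \<subseteq> ?K" "card {0, u, w} = 3"
      using \<open>{0, u} \<subseteq> ?K\<close> u(1) by auto
    then have "3 \<le> card ?K"
      by (metis card_mono finite)
    have "card ((\<lambda>y. y + u) ` ?D) = card ?D"
      by (rule card_image) (simp add: inj_on_def)
    then have "card (?D \<union> (\<lambda>y. y + u) ` ?D) \<le> card ?D + card ?D"
      using card_Un_le[of ?D "(\<lambda>y. y + u) ` ?D"] by simp
    also have "\<dots> < card ?D * 3"
      using \<open>0 < card ?D\<close> by simp
    also have "\<dots> \<le> card (UNIV :: 'a set)"
      using card_UNIV \<open>3 \<le> card ?K\<close> by simp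
    finally show ?thesis .
  qed
  then have "?D \<union> (\<lambda>y. y + u) ` ?D \<noteq> UNIV"
    by auto
  then obtain q where q: "q \<notin> ?D \<union> (\<lambda>y. y + u) ` ?D"
    by blast
  have "q + u \<notin> ?D"
  proof
    assume "q + u \<in> ?D"
    moreover have "q = (q + u) + u"
      using u(2) by (simp add: add.assoc)
    ultimately show False
      using q by blast
  qed
  then show thesis
    using that u q by blast
qed

section \<open>Partition of the group into 2 \<times> 2 blocks\<close>

lemma bij_betw_free_klein_orbit:
  fixes f g :: "'a \<Rightarrow> 'a"
  assumes "\<And>x. f (f x) = x" and "\<And>x. f x \<noteq> x" "\<And>x. g x \<noteq> x" "\<And>x. f (g x) \<noteq> x"
  shows "bij_betw (\<lambda>(x, p, e). (f ^^ p) ((g ^^ e) x)) ({a} \<times> {..<2} \<times> {..<2}) {a, f a, g a, f (g a)}"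
proof -
  have "f a \<noteq> g a" "f a \<noteq> f (g a)" "g a \<noteq> f (g a)"
    using assms by metis+
  then show ?thesis
    using assms(2-4)[of a] unfolding bij_betw_def inj_on_def
    by (auto simp: lessThan_Suc numeral_2_eq_2)
qed

lemma transversal_of_free_klein_action:
  fixes f g :: "'a \<Rightarrow> 'a"
  assumes "finite S" "\<And>x. x \<in> S \<Longrightarrow> f x \<in> S" "\<And>x. x \<in> S \<Longrightarrow> g x \<in> S"
    and f_inv: "\<And>x. f (f x) = x" and g_inv: "\<And>x. g (g x) = x" and comm: "\<And>x. f (g x) = g (f x)"
    and free: "\<And>x. f x \<noteq> x" "\<And>x. g x \<noteq> x" "\<And>x. f (g x) \<noteq> x"
  shows "\<exists>R. bij_betw (\<lambda>(x, p, e). (f ^^ p) ((g ^^ e) x)) (R \<times> {..<2} \<times> {..<2}) S"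
  using assms(1-3)
proof (induction S rule: finite_psubset_induct)
  case (psubset S)
  let ?act = "\<lambda>(x, p, e). (f ^^ p) ((g ^^ e) x)"
  show ?case
  proof (cases "S = {}")
    case True
    then show ?thesis
      by (intro exI[of _ "{}"]) (simp add: bij_betw_def)
  next
    case False
    then obtain a where "a \<in> S"
      by blast
    let ?O = "{a, f a, g a, f (g a)}"
    have "?O \<subseteq> S"
      using \<open>a \<in> S\<close> psubset.prems by auto
    have f_closed: "f ` ?O = ?O" and g_closed: "g ` ?O = ?O"
      using f_inv g_inv comm by auto
    have "\<exists>R. bij_betw ?act (R \<times> {..<2} \<times> {..<2}) (S - ?O)"
    proof (rule psubset.IH)
      show "S - ?O \<subset> S"
        using \<open>a \<in> S\<close> by blast
      show "f x \<in> S - ?O" if "x \<in> S - ?O" for x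
        using that psubset.prems(1) f_closed f_inv by (metis DiffD1 DiffD2 DiffI imageI)
      show "g x \<in> S - ?O" if "x \<in> S - ?O" for x
        using that psubset.prems(2) g_closed g_inv by (metis DiffD1 DiffD2 DiffI imageI)
    qed
    then obtain R where R: "bij_betw ?act (R \<times> {..<2} \<times> {..<2}) (S - ?O)"
      by blast
    have orbit: "bij_betw ?act ({a} \<times> {..<2} \<times> {..<2}) ?O"
      using bij_betw_free_klein_orbit[OF f_inv free] .
    have "bij_betw ?act ({a} \<times> {..<2} \<times> {..<2} \<union> R \<times> {..<2} \<times> {..<2}) (?O \<union> (S - ?O))"
      by (rule bij_betw_combine[OF orbit R]) blast
    moreover have "?O \<union> (S - ?O) = S"
      using \<open>?O \<subseteq> S\<close> by blast
    moreover have "{a} \<times> {..<2} \<times> {..<2} \<union> R \<times> {..<2} \<times> {..<2} = insert a R \<times> {..<2::nat} \<times> {..<2::nat}"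
      by blast
    ultimately have "bij_betw ?act (insert a R \<times> {..<2} \<times> {..<2}) S"
      by simp
    then show ?thesis
      by blast
  qed
qed

lemma exists_uniform_2x2_blocks:
  assumes "4 dvd card (UNIV :: 'a set)"
  obtains R :: "'a::{ab_group_add,finite} set" and V :: "'a \<Rightarrow> nat \<Rightarrow> nat \<Rightarrow> 'a" and r q
  where "bij_betw (\<lambda>(x, p, e). V x p e) (R \<times> {..<2} \<times> {..<2}) UNIV"
    and "card (UNIV :: 'a set) = 4 * card R"
    and "\<And>x p. p < 2 \<Longrightarrow> V x p 0 + V x p 1 = r"
    and "\<And>x e. e < 2 \<Longrightarrow> V x 0 e + V x 1 e = q"
proof -
  obtain u q :: 'a where u: "u \<noteq> 0" "u + u = 0"
    and q: "q \<notin> range (\<lambda>a. a + a)" "q + u \<notin> range (\<lambda>a. a + a)"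
    using exists_order_two_and_non_doubles[OF assms] by blast
  have neg_u: "-u = u"
    using u(2) by (metis minus_unique)
  define col_partner where "col_partner a = q - a" for a
  define row_partner where "row_partner a = q + u - a" for a
  have "\<exists>R. bij_betw (\<lambda>(x, p, e). (col_partner ^^ p) ((row_partner ^^ e) x)) (R \<times> {..<2} \<times> {..<2}) UNIV"
  proof (rule transversal_of_free_klein_action)
    show "col_partner (row_partner x) = row_partner (col_partner x)" for x
      using u(2) by (simp add: col_partner_def row_partner_def algebra_simps)
    show "col_partner x \<noteq> x" for x
      using q(1) by (auto simp: col_partner_def diff_eq_eq)
    show "row_partner x \<noteq> x" for x
      using q(2) by (auto simp: row_partner_def diff_eq_eq)
    show "col_partner (row_partner x) \<noteq> x" for x
      using u(1) neg_u by (simp add: col_partner_def row_partner_def algebra_simps)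
  qed (simp_all add: col_partner_def row_partner_def)
  then obtain R where R: "bij_betw (\<lambda>(x, p, e). (col_partner ^^ p) ((row_partner ^^ e) x)) (R \<times> {..<2} \<times> {..<2}) UNIV"
    by blast
  have "card (UNIV :: 'a set) = 4 * card R"
    using bij_betw_same_card[OF R] by (simp add: card_cartesian_product)
  moreover have "(col_partner ^^ p) x + (col_partner ^^ p) (row_partner x) = q + u" if "p < 2" for x p
    using that u(2) neg_u by (auto simp: less_2_cases_iff col_partner_def row_partner_def algebra_simps)
  moreover have "(row_partner ^^ e) x + col_partner ((row_partner ^^ e) x) = q" for x e
    by (simp add: col_partner_def)
  ultimately show thesis
    using that[OF R] by simp
qed

section \<open>A regular pattern\<close>

lemma eq_if_div_eq_and_mod_eq:
  fixes x y S N :: nat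
  assumes "0 < S" "S \<le> N" "x div S = y div S" "x mod N = y mod N"
  shows "x = y"
proof -
  have less: "b - a < N" if "a \<le> b" "a div S = b div S" for a b :: nat
  proof -
    have "b div S * S = a div S * S"
      using that(2) by simp
    then have "b - a = b mod S - a mod S"
      using div_mult_mod_eq[of a S] div_mult_mod_eq[of b S] by linarith
    also have "\<dots> < S"
      using \<open>0 < S\<close> by (simp add: less_imp_diff_less)
    finally show ?thesis
      using \<open>S \<le> N\<close> by simp
  qed
  show ?thesis
  proof (cases "x \<le> y")
    case True
    then have "N dvd y - x"
      using assms(4) by (simp add: mod_eq_dvd_iff_nat[symmetric])
    then show ?thesis
      using less[OF True assms(3)] True nat_dvd_not_less by fastforce
  next
    case False
    then have "N dvd x - y"
      using assms(4) by (simp add: mod_eq_dvd_iff_nat)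
    then show ?thesis
      using less[of y x] False assms(3) nat_dvd_not_less by fastforce
  qed
qed

lemma card_div_fibre:
  fixes i M S :: nat
  assumes "i < M"
  shows "card {x. x < M * S \<and> x div S = i} = S"
proof -
  have "{x. x < M * S \<and> x div S = i} = (\<lambda>l. i * S + l) ` {..<S}"
  proof (intro set_eqI iffI)
    fix x
    assume x: "x \<in> {x. x < M * S \<and> x div S = i}"
    then have "x mod S < S"
      by (cases "S = 0") simp_all
    moreover have "x = i * S + x mod S"
      using x div_mult_mod_eq[of x S] by (simp add: mult.commute)
    ultimately show "x \<in> (\<lambda>l. i * S + l) ` {..<S}"
      by blast
  next
    fix x
    assume "x \<in> (\<lambda>l. i * S + l) ` {..<S}"
    then obtain l where l: "l < S" "x = i * S + l"
      by blast
    have "(i + 1) * S \<le> M * S"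
      using assms by (intro mult_le_mono1) simp
    then have "i * S + S \<le> M * S"
      by simp
    then show "x \<in> {x. x < M * S \<and> x div S = i}"
      using l by simp
  qed
  then show ?thesis
    by (simp add: card_image)
qed

lemma card_mod_fibre:
  fixes j N K :: nat
  assumes "j < N"
  shows "card {x. x < N * K \<and> x mod N = j} = K"
proof -
  have "{x. x < N * K \<and> x mod N = j} = (\<lambda>y. y * N + j) ` {..<K}"
  proof (intro set_eqI iffI)
    fix x
    assume x: "x \<in> {x. x < N * K \<and> x mod N = j}"
    then have "x div N < K"
      using assms by (simp add: div_less_iff_less_mult mult.commute)
    moreover have "x = x div N * N + j"
      using x div_mult_mod_eq[of x N] by simp
    ultimately show "x \<in> (\<lambda>y. y * N + j) ` {..<K}"
      by blast
  next
    fix x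
    assume "x \<in> (\<lambda>y. y * N + j) ` {..<K}"
    then obtain y where y: "y < K" "x = y * N + j"
      by blast
    have "(y + 1) * N \<le> K * N"
      using y(1) by (intro mult_le_mono1) simp
    then have "y * N + N \<le> K * N"
      by simp
    then show "x \<in> {x. x < N * K \<and> x mod N = j}"
      using y assms by (simp add: mult.commute)
  qed
  moreover have "inj_on (\<lambda>y. y * N + j) {..<K}"
    using assms by (auto simp: inj_on_def)
  ultimately show ?thesis
    by (simp add: card_image)
qed

lemma exists_regular_pattern:
  fixes M N S K :: nat
  assumes "0 < S" "S \<le> N" "M * S = N * K"
  obtains P where "P \<subseteq> {..<M} \<times> {..<N}" "card P = M * S"
    and "\<And>i. i < M \<Longrightarrow> card {j. (i, j) \<in> P} = S"
    and "\<And>j. j < N \<Longrightarrow> card {i. (i, j) \<in> P} = K"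
proof
  let ?cell = "\<lambda>x. (x div S, x mod N)"
  let ?P = "?cell ` {..<M * S}"
  note cell_eq = eq_if_div_eq_and_mod_eq[OF assms(1,2)]
  show "?P \<subseteq> {..<M} \<times> {..<N}"
    using assms(1,2) by (auto simp: div_less_iff_less_mult)
  have "inj ?cell"
    by (rule injI, rule cell_eq) auto
  then show "card ?P = M * S"
    by (simp add: card_image inj_on_subset)
  show "card {j. (i, j) \<in> ?P} = S" if "i < M" for i
  proof -
    have "{j. (i, j) \<in> ?P} = (\<lambda>x. x mod N) ` {x. x < M * S \<and> x div S = i}"
      by blast
    moreover have "inj_on (\<lambda>x. x mod N) {x. x < M * S \<and> x div S = i}"
      by (rule inj_onI, rule cell_eq) auto
    ultimately show ?thesis
      using card_div_fibre[OF that] by (simp add: card_image)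
  qed
  show "card {i. (i, j) \<in> ?P} = K" if "j < N" for j
  proof -
    have "{i. (i, j) \<in> ?P} = (\<lambda>x. x div S) ` {x. x < N * K \<and> x mod N = j}"
      unfolding assms(3) by blast
    moreover have "inj_on (\<lambda>x. x div S) {x. x < N * K \<and> x mod N = j}"
      by (rule inj_onI, rule cell_eq) auto
    ultimately show ?thesis
      using card_mod_fibre[OF that] by (simp add: card_image)
  qed
qed

section \<open>Blowing up a pattern\<close>

lemma sum_div2_preimage:
  fixes g :: "nat \<Rightarrow> 'a::comm_monoid_add" and X :: "nat set"
  assumes "finite X"
  shows "(\<Sum>I | I div 2 \<in> X. g I) = (\<Sum>i\<in>X. g (2 * i) + g (2 * i + 1))"
proof -
  have "{I. I div 2 \<in> X} = (\<lambda>(i, b). 2 * i + b) ` (X \<times> {..<2})"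
  proof (intro set_eqI iffI)
    fix I
    assume "I \<in> {I. I div 2 \<in> X}"
    moreover have "I = 2 * (I div 2) + I mod 2"
      by simp
    ultimately show "I \<in> (\<lambda>(i, b). 2 * i + b) ` (X \<times> {..<2})"
      by (auto intro!: image_eqI[where x = "(I div 2, I mod 2)"])
  qed auto
  moreover have "inj_on (\<lambda>(i, b). 2 * i + b) (X \<times> {..<2::nat})"
    by (auto simp: inj_on_def) presburger+
  ultimately have "(\<Sum>I | I div 2 \<in> X. g I) = (\<Sum>(i, b) \<in> X \<times> {..<2}. g (2 * i + b))"
    by (simp add: sum.reindex case_prod_beta')
  also have "\<dots> = (\<Sum>i\<in>X. g (2 * i) + g (2 * i + 1))"
    by (simp add: sum.cartesian_product[symmetric] numeral_2_eq_2 lessThan_Suc add.commute)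
  finally show ?thesis .
qed

lemma card_div2_preimage:
  fixes X :: "nat set"
  assumes "finite X"
  shows "card {I. I div 2 \<in> X} = 2 * card X"
  using sum_div2_preimage[OF assms, of "\<lambda>_. 1::nat"] by simp

lemma sum_const_eq_sum_lessThan_card:
  fixes r :: "'a::comm_monoid_add"
  assumes "finite A"
  shows "(\<Sum>x\<in>A. r) = (\<Sum>x<card A. r)"
  using assms by (induction A rule: finite_induct) (simp_all add: add.commute)

definition blow_up ::
    "(nat \<times> nat \<times> nat \<Rightarrow> 'x) \<Rightarrow> ('x \<Rightarrow> nat \<Rightarrow> nat \<Rightarrow> 'a) \<Rightarrow> nat \<Rightarrow> (nat \<times> nat) set \<Rightarrow> nat \<Rightarrow> nat \<Rightarrow> nat \<Rightarrow> 'a option"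
  where "blow_up \<beta> V c P t I J =
    (if t < c \<and> (I div 2, J div 2) \<in> P then Some (V (\<beta> (t, I div 2, J div 2)) (I mod 2) (J mod 2)) else None)"

lemma filled_cells_blow_up:
  assumes "P \<subseteq> {..<M} \<times> {..<N}"
  shows "filled_cells (2 * M) (2 * N) c (blow_up \<beta> V c P) = {(t, I, J). (t, I div 2, J div 2) \<in> {..<c} \<times> P}"
  using assms by (auto simp: filled_cells_def blow_up_def)

lemma bij_betw_split_2x2:
  fixes Q :: "('t \<times> nat \<times> nat) set"
  shows "bij_betw (\<lambda>(t, I, J). ((t, I div 2, J div 2), I mod 2, J mod 2))
     {(t, I, J). (t, I div 2, J div 2) \<in> Q} (Q \<times> {..<2} \<times> {..<2})"
  by (rule bij_betw_byWitness[where f' = "\<lambda>((t, i, j), p, e). (t, 2 * i + p, 2 * j + e)"]) auto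

lemma doubled_line_card_and_sum:
  fixes B :: "nat \<Rightarrow> 'a::comm_monoid_add option"
  assumes "finite L" and line: "{J. J < n \<and> B J \<noteq> None} = {J. J div 2 \<in> L}"
    and pairs: "\<And>j. j \<in> L \<Longrightarrow> the (B (2 * j)) + the (B (2 * j + 1)) = r"
  shows "card {J. J < n \<and> B J \<noteq> None} = 2 * card L"
    and "(\<Sum>J | J < n \<and> B J \<noteq> None. the (B J)) = (\<Sum>l<card L. r)"
proof -
  show "card {J. J < n \<and> B J \<noteq> None} = 2 * card L"
    unfolding line by (rule card_div2_preimage[OF assms(1)])
  have "(\<Sum>J | J < n \<and> B J \<noteq> None. the (B J)) = (\<Sum>j\<in>L. the (B (2 * j)) + the (B (2 * j + 1)))"
    unfolding line by (rule sum_div2_preimage[OF assms(1)])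
  also have "\<dots> = (\<Sum>j\<in>L. r)"
    using pairs by simp
  also have "\<dots> = (\<Sum>l<card L. r)"
    by (rule sum_const_eq_sum_lessThan_card[OF assms(1)])
  finally show "(\<Sum>J | J < n \<and> B J \<noteq> None. the (B J)) = (\<Sum>l<card L. r)" .
qed

lemma blow_up_row_card_and_sum:
  assumes P: "P \<subseteq> {..<M} \<times> {..<N}" and "t < c" "card {j. (I div 2, j) \<in> P} = S"
    and pairs: "\<And>j. (I div 2, j) \<in> P \<Longrightarrow> V (\<beta> (t, I div 2, j)) (I mod 2) 0 + V (\<beta> (t, I div 2, j)) (I mod 2) 1 = r"
  defines "A \<equiv> blow_up \<beta> V c P"
  shows "card {J. J < 2 * N \<and> A t I J \<noteq> None} = 2 * S \<and>
    (\<Sum>J | J < 2 * N \<and> A t I J \<noteq> None. the (A t I J)) = (\<Sum>l<S. r)"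
proof -
  let ?row = "{j. (I div 2, j) \<in> P}"
  have "finite ?row"
    by (rule finite_subset[of _ "{..<N}"]) (use P in auto)
  moreover have "{J. J < 2 * N \<and> A t I J \<noteq> None} = {J. J div 2 \<in> ?row}"
    using P \<open>t < c\<close> by (auto simp: A_def blow_up_def)
  moreover have "the (A t I (2 * j)) + the (A t I (2 * j + 1)) = r" if "j \<in> ?row" for j
    using pairs that \<open>t < c\<close> by (simp add: A_def blow_up_def One_nat_def)
  ultimately show ?thesis
    using doubled_line_card_and_sum[of ?row "2 * N" "A t I"] \<open>card ?row = S\<close> by simp
qed

lemma blow_up_col_card_and_sum:
  assumes P: "P \<subseteq> {..<M} \<times> {..<N}" and "t < c" "card {i. (i, J div 2) \<in> P} = K"
    and pairs: "\<And>i. (i, J div 2) \<in> P \<Longrightarrow> V (\<beta> (t, i, J div 2)) 0 (J mod 2) + V (\<beta> (t, i, J div 2)) 1 (J mod 2) = q"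
  defines "A \<equiv> blow_up \<beta> V c P"
  shows "card {I. I < 2 * M \<and> A t I J \<noteq> None} = 2 * K \<and>
    (\<Sum>I | I < 2 * M \<and> A t I J \<noteq> None. the (A t I J)) = (\<Sum>l<K. q)"
proof -
  let ?col = "{i. (i, J div 2) \<in> P}"
  have "finite ?col"
    by (rule finite_subset[of _ "{..<M}"]) (use P in auto)
  moreover have "{I. I < 2 * M \<and> A t I J \<noteq> None} = {I. I div 2 \<in> ?col}"
    using P \<open>t < c\<close> by (auto simp: A_def blow_up_def)
  moreover have "the (A t (2 * i) J) + the (A t (2 * i + 1) J) = q" if "i \<in> ?col" for i
    using pairs that \<open>t < c\<close> by (simp add: A_def blow_up_def One_nat_def)
  ultimately show ?thesis
    using doubled_line_card_and_sum[of ?col "2 * M" "\<lambda>I. A t I J"] \<open>card ?col = K\<close> by simp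
qed

lemma ex1_Some_if_bij_betw:
  assumes "bij_betw f C UNIV" "\<And>x. x \<in> C \<Longrightarrow> h x = Some (f x)"
  shows "\<exists>!x. x \<in> C \<and> h x = Some y"
proof -
  obtain x where "x \<in> C" "f x = y"
    using assms(1) by (metis UNIV_I bij_betw_iff_bijections)
  moreover have "x' = x" if "x' \<in> C" "h x' = Some y" for x'
    using that \<open>x \<in> C\<close> \<open>f x = y\<close> assms by (metis bij_betw_iff_bijections option.inject)
  ultimately show ?thesis
    using assms(2) by blast
qed

lemma blow_up_entries_unique:
  assumes P: "P \<subseteq> {..<M} \<times> {..<N}" and \<beta>: "bij_betw \<beta> ({..<c} \<times> P) X"
    and V: "bij_betw (\<lambda>(x, p, e). V x p e) (X \<times> {..<2} \<times> {..<2}) UNIV"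
  defines "A \<equiv> blow_up \<beta> V c P"
  shows "\<exists>!cell. cell \<in> filled_cells (2 * M) (2 * N) c A \<and> A (fst cell) (fst (snd cell)) (snd (snd cell)) = Some g"
proof (rule ex1_Some_if_bij_betw)
  let ?content = "(\<lambda>(x, p, e). V x p e) \<circ> map_prod \<beta> id \<circ> (\<lambda>(t, I, J). ((t, I div 2, J div 2), I mod 2, J mod 2))"
  have cells: "filled_cells (2 * M) (2 * N) c A = {(t, I, J). (t, I div 2, J div 2) \<in> {..<c} \<times> P}"
    unfolding A_def by (rule filled_cells_blow_up[OF P])
  show "bij_betw ?content (filled_cells (2 * M) (2 * N) c A) UNIV"
    unfolding cells by (intro bij_betw_trans[OF bij_betw_split_2x2] bij_betw_trans[OF _ V] bij_betw_map_prod \<beta> bij_betw_id)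
  show "A (fst cell) (fst (snd cell)) (snd (snd cell)) = Some (?content cell)"
    if "cell \<in> filled_cells (2 * M) (2 * N) c A" for cell
    using that cells by (cases cell) (simp add: A_def blow_up_def)
qed

lemma is_MRS_blow_up:
  fixes V :: "'x \<Rightarrow> nat \<Rightarrow> nat \<Rightarrow> 'a::ab_group_add"
  assumes P: "P \<subseteq> {..<M} \<times> {..<N}"
    and row_card: "\<And>i. i < M \<Longrightarrow> card {j. (i, j) \<in> P} = S"
    and col_card: "\<And>j. j < N \<Longrightarrow> card {i. (i, j) \<in> P} = K"
    and X: "finite X" "card X = c * card P"
    and V: "bij_betw (\<lambda>(x, p, e). V x p e) (X \<times> {..<2} \<times> {..<2}) UNIV"
    and row_sum: "\<And>x p. x \<in> X \<Longrightarrow> p < 2 \<Longrightarrow> V x p 0 + V x p 1 = r"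
    and col_sum: "\<And>x e. x \<in> X \<Longrightarrow> e < 2 \<Longrightarrow> V x 0 e + V x 1 e = q"
  shows "\<exists>A :: nat \<Rightarrow> nat \<Rightarrow> nat \<Rightarrow> 'a option. is_MRS (2 * M) (2 * N) (2 * S) (2 * K) c A"
proof -
  have "finite P"
    using P finite_subset by blast
  then obtain \<beta> where \<beta>: "bij_betw \<beta> ({..<c} \<times> P) X"
    using finite_same_card_bij[of "{..<c} \<times> P" X] X by (auto simp: card_cartesian_product)
  define A where "A = blow_up \<beta> V c P"
  have block_in_X: "\<beta> (t, i, j) \<in> X" if "t < c" "(i, j) \<in> P" for t i j
    using \<beta> that by (auto dest: bij_betw_apply)
  have rows: "card {J. J < 2 * N \<and> A t I J \<noteq> None} = 2 * S \<and>
      (\<Sum>J | J < 2 * N \<and> A t I J \<noteq> None. the (A t I J)) = (\<Sum>l<S. r)" if "t < c" "I < 2 * M" for t I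
    unfolding A_def
  proof (rule blow_up_row_card_and_sum[OF P \<open>t < c\<close>])
    show "card {j. (I div 2, j) \<in> P} = S"
      using row_card \<open>I < 2 * M\<close> by simp
    show "V (\<beta> (t, I div 2, j)) (I mod 2) 0 + V (\<beta> (t, I div 2, j)) (I mod 2) 1 = r" if "(I div 2, j) \<in> P" for j
      using row_sum[OF block_in_X[OF \<open>t < c\<close> that]] by simp
  qed
  have cols: "card {I. I < 2 * M \<and> A t I J \<noteq> None} = 2 * K \<and>
      (\<Sum>I | I < 2 * M \<and> A t I J \<noteq> None. the (A t I J)) = (\<Sum>l<K. q)" if "t < c" "J < 2 * N" for t J
    unfolding A_def
  proof (rule blow_up_col_card_and_sum[OF P \<open>t < c\<close>])
    show "card {i. (i, J div 2) \<in> P} = K"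
      using col_card \<open>J < 2 * N\<close> by simp
    show "V (\<beta> (t, i, J div 2)) 0 (J mod 2) + V (\<beta> (t, i, J div 2)) 1 (J mod 2) = q" if "(i, J div 2) \<in> P" for i
      using col_sum[OF block_in_X[OF \<open>t < c\<close> that]] by simp
  qed
  have "\<exists>!cell. cell \<in> filled_cells (2 * M) (2 * N) c A \<and> A (fst cell) (fst (snd cell)) (snd (snd cell)) = Some g" for g
    unfolding A_def by (rule blow_up_entries_unique[OF P \<beta> V])
  then have "is_MRS (2 * M) (2 * N) (2 * S) (2 * K) c A"
    unfolding is_MRS_def using rows cols by blast
  then show ?thesis
    by blast
qed

theorem proposition5p10:
  fixes m n s k c :: nat
  assumes "even m" and "even n" and "even s" and "even k"
    and "2 \<le> s" and "s \<le> n" and "2 \<le> k" and "k \<le> m"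
    and "m * s = n * k" and "1 \<le> c"
    and "card (UNIV :: ('a::{ab_group_add, finite}) set) = n * k * c"
  shows "\<exists>A :: nat \<Rightarrow> nat \<Rightarrow> nat \<Rightarrow> ('a::{ab_group_add, finite}) option. is_MRS m n s k c A"
proof -
  obtain M N S K where m: "m = 2 * M" and n: "n = 2 * N" and s: "s = 2 * S" and k: "k = 2 * K"
    using assms(1-4) by (metis evenE)
  have "0 < S" "S \<le> N" and MS: "M * S = N * K"
    using assms(5,6,9) m n s k by simp_all
  then obtain P where P: "P \<subseteq> {..<M} \<times> {..<N}" "card P = M * S"
    "\<And>i. i < M \<Longrightarrow> card {j. (i, j) \<in> P} = S" "\<And>j. j < N \<Longrightarrow> card {i. (i, j) \<in> P} = K"
    using exists_regular_pattern by blast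
  have card_UNIV: "card (UNIV :: 'a set) = 4 * (c * card P)"
    using assms(11) n k P(2) MS by simp
  then have "4 dvd card (UNIV :: 'a set)"
    by simp
  then obtain V :: "'a \<Rightarrow> nat \<Rightarrow> nat \<Rightarrow> 'a" and R r q
    where blocks: "bij_betw (\<lambda>(x, p, e). V x p e) (R \<times> {..<2} \<times> {..<2}) UNIV"
      "card (UNIV :: 'a set) = 4 * card R"
      "\<And>x p. p < 2 \<Longrightarrow> V x p 0 + V x p 1 = r" "\<And>x e. e < 2 \<Longrightarrow> V x 0 e + V x 1 e = q"
    by (rule exists_uniform_2x2_blocks) blast
  have "card R = c * card P"
    using card_UNIV blocks(2) by simp
  then have "\<exists>A :: nat \<Rightarrow> nat \<Rightarrow> nat \<Rightarrow> 'a option. is_MRS (2 * M) (2 * N) (2 * S) (2 * K) c A"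
    using is_MRS_blow_up[OF P(1,3,4) finite _ blocks(1)] blocks(3,4) by blast
  then show ?thesis
    using m n s k by simp
qed

end
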